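(* Consider the following model. Fix $n\ge1$, $\mu\in\mathbb R^n$, $n\times n$ matrices $A,B,C$, a positive definite $\Sigma_0$ and positive initial prices. Let $$R_{t+1}=\mu+Z_{t+1},\qquad \Sigma_{t+1}=CC^\top+A\Sigma_tA^\top+BZ_{t+1}Z_{t+1}^\top B^\top,$$ where conditionally on the past $Z_{t+1}$ has mean $0$ and covariance $\Sigma_t$; prices $S^i_{t+1}=h(S^i_t,R^i_{t+1})$, $\vec S_t=(S^1_t,\dots,S^n_t)^\top$, $\Psi_t=\mathrm{diag}(\vec S_t)$, $P_t=\Psi_t\Sigma_t\Psi_t$. Let $\gamma>0$, $\epsilon>0$, $q:\mathbb R^n\times\mathbb R^{n\times n}\to\mathbb R^+$, and $\widetilde P_t=\frac{\gamma}{\epsilon q(\vec S_t,P_t)}P_t$. Assume: (i) $C$ has full rank, so $c:=\inf_{\|v\|=1}v^\top CC^\top v>0$; (ii) $\|h\|_\infty=\sup_{s,r}|h(s,r)|<\infty$ and there is $\underline s>0$ with $\inf_{s,r}h(s,r)\ge\underline s$; (iii) there is $\chi<\infty$ with $1\le q(s,p)\le\chi$ for all $(s,p)$. Then for all $t$, $$\left\|\frac{1}{\epsilon q(\vec S_t,P_t)}\Psi_t^{-1}\right\|\le\frac{1}{\epsilon\underline s},\qquad \left\|\left(I+\widetilde P_t\Psi_t^{-1}\right)^{-1}P_t\right\|\le\frac{\epsilon}{\gamma}\chi\|h\|_\infty.$$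
   Context: $\|\cdot\|$ denotes the operator norm induced by the Euclidean norm. $\mathrm{diag}(\vec S_t)$ is the diagonal matrix with the entries of $\vec S_t$ on its diagonal. *)

theory Defs
  imports "HOL-Analysis.Analysis"
begin

definition opnorm :: "real^'n^'n \<Rightarrow> real" where
  "opnorm M = onorm (\<lambda>x. M *v x)"

definition diag_mat :: "real^'n \<Rightarrow> real^'n^'n" where
  "diag_mat v = (\<chi> i j. if i = j then v $ i else 0)"

definition outer :: "real^'n \<Rightarrow> real^'n \<Rightarrow> real^'n^'n" where
  "outer z w = (\<chi> i j. z $ i * w $ j)"

definition pos_def :: "real^'n^'n \<Rightarrow> bool" where
  "pos_def M \<longleftrightarrow> transpose M = M \<and> (\<forall>v. v \<noteq> 0 \<longrightarrow> v \<bullet> (M *v v) > 0)"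

definition sup_norm2 :: "(real \<Rightarrow> real \<Rightarrow> real) \<Rightarrow> real" where
  "sup_norm2 h = (SUP p\<in>UNIV. \<bar>h (fst p) (snd p)\<bar>)"

end

theory Submission
  imports Defs
begin

(*
  For t >= 1 every price S_t^i is a value of h, so s_low <= S_t^i <= ||h||, and Sigma_t is positive
  semidefinite, being obtained from Sigma_0 by sums and congruences of positive semidefinite
  matrices.  The first bound
  is the norm of a diagonal matrix.

  For the second, put D = Psi_t and k = gamma / (eps q).  Then P~_t Psi_t^-1 = k D Sigma_t, so the
  matrix in question is (I + k D Sigma_t)^-1 D Sigma_t D.  If w + k D Sigma_t w = D Sigma_t D x,
  set z = D x - k w and y = Sigma_t z; then w = D y and D x = z + k D y.  Comparing squares
  weighted by D^-1 coordinatewise gives x.Dx >= 2k z.y + k^2 y.Dy >= k^2 y.Dy, because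
  z.y = z.Sigma_t z >= 0.  Together with |w|^2 <= ||h|| y.Dy and x.Dx <= ||h|| |x|^2 this yields
  k |w| <= ||h|| |x|.  Hence I + k D Sigma_t is injective, thus invertible, and
  ||(I + k D Sigma_t)^-1 D Sigma_t D|| <= ||h|| / k <= eps chi ||h|| / gamma.
*)

lemma matrix_inv_right:
  fixes A :: "'a::semiring_1^'n^'m"
  assumes "invertible A"
  shows "A ** matrix_inv A = mat 1"
proof -
  have "\<exists>A'. A ** A' = mat 1 \<and> A' ** A = mat 1"
    using assms unfolding invertible_def by blast
  then have "A ** matrix_inv A = mat 1 \<and> matrix_inv A ** A = mat 1"
    unfolding matrix_inv_def by (rule someI_ex)
  then show ?thesis ..
qed

lemma matrix_inv_unique:
  fixes A :: "'a::semiring_1^'n^'n"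
  assumes AB: "A ** B = mat 1" and BA: "B ** A = mat 1"
  shows "matrix_inv A = B"
proof -
  have "invertible A" using AB BA unfolding invertible_def by blast
  then have "B = (B ** A) ** matrix_inv A"
    by (simp add: matrix_inv_right flip: matrix_mul_assoc)
  then show ?thesis using BA by simp
qed

lemma diag_mat_mult_vec: "diag_mat d *v x = (\<chi> i. d $ i * x $ i)"
  by (simp add: diag_mat_def matrix_vector_mult_def vec_eq_iff if_distrib [of "\<lambda>a. a * _"]
      cong: if_cong)

lemma diag_mat_mult: "diag_mat a ** diag_mat b = diag_mat (\<chi> i. a $ i * b $ i)"
  by (simp add: diag_mat_def matrix_matrix_mult_def vec_eq_iff if_distrib [of "\<lambda>a. a * _"]
      cong: if_cong)

lemma scaleR_diag_mat: "c *\<^sub>R diag_mat d = diag_mat (c *\<^sub>R d)"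
  by (simp add: diag_mat_def vec_eq_iff)

lemma mat_1_eq_diag_mat: "mat 1 = diag_mat (\<chi> i. 1)"
  by (simp add: mat_def diag_mat_def vec_eq_iff)

lemma matrix_inv_diag_mat:
  assumes "\<forall>i. d $ i \<noteq> 0"
  shows "matrix_inv (diag_mat d) = diag_mat (\<chi> i. inverse (d $ i))"
  by (rule matrix_inv_unique) (simp_all add: diag_mat_mult mat_1_eq_diag_mat assms)

lemma norm_vec_power2: "(norm x)\<^sup>2 = (\<Sum>i\<in>UNIV. (x $ i :: real)\<^sup>2)"
  by (simp only: power2_norm_eq_inner) (simp add: inner_vec_def power2_eq_square)

lemma norm_diag_mat_mult_le:
  assumes "\<forall>i. \<bar>d $ i\<bar> \<le> b"
  shows "norm (diag_mat d *v x) \<le> b * norm x"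
proof (rule power2_le_imp_le)
  show "0 \<le> b * norm x"
    using assms by (metis abs_ge_zero norm_ge_zero order_trans zero_le_mult_iff)
  have "norm (diag_mat d *v x) ^ 2 = (\<Sum>i\<in>UNIV. (d $ i)\<^sup>2 * (x $ i)\<^sup>2)"
    by (simp add: norm_vec_power2 diag_mat_mult_vec power_mult_distrib)
  also have "\<dots> \<le> (\<Sum>i\<in>UNIV. b\<^sup>2 * (x $ i)\<^sup>2)"
    using assms by (intro sum_mono mult_right_mono)
      (simp_all, metis abs_ge_zero power2_abs power_mono)
  also have "\<dots> = (b * norm x)\<^sup>2"
    by (simp add: norm_vec_power2 sum_distrib_left power_mult_distrib)
  finally show "norm (diag_mat d *v x) ^ 2 \<le> (b * norm x)\<^sup>2" .
qed

lemma opnorm_diag_mat_le: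
  assumes "\<forall>i. \<bar>d $ i\<bar> \<le> b"
  shows "opnorm (diag_mat d) \<le> b"
  unfolding opnorm_def using norm_diag_mat_mult_le [OF assms] by (rule onorm_le)

text \<open>Unlike \<^const>\<open>pos_def\<close>, no symmetry is required: only the quadratic form is used.\<close>

definition pos_semidef :: "real^'n^'n \<Rightarrow> bool" where
  "pos_semidef M \<longleftrightarrow> (\<forall>v. 0 \<le> v \<bullet> (M *v v))"

lemma pos_def_imp_pos_semidef: "pos_def M \<Longrightarrow> pos_semidef M"
  unfolding pos_def_def pos_semidef_def by (metis inner_zero_left order.refl order_less_imp_le)

lemma pos_semidef_add:
  "pos_semidef M \<Longrightarrow> pos_semidef N \<Longrightarrow> pos_semidef (M + N)"
  by (simp add: pos_semidef_def matrix_vector_mult_add_rdistrib inner_add_right)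

lemma pos_semidef_mat_1: "pos_semidef (mat 1)"
  by (simp add: pos_semidef_def)

lemma pos_semidef_outer: "pos_semidef (outer z z)"
proof -
  have "outer z z *v v = (z \<bullet> v) *\<^sub>R z" for v
    by (simp add: outer_def matrix_vector_mult_def vec_eq_iff inner_vec_def sum_distrib_left
        mult_ac)
  then show ?thesis by (simp add: pos_semidef_def inner_commute)
qed

lemma pos_semidef_congruence:
  assumes "pos_semidef M"
  shows "pos_semidef (A ** M ** transpose A)"
proof -
  have "v \<bullet> ((A ** M ** transpose A) *v v) = (v v* A) \<bullet> (M *v (v v* A))" for v
    by (metis dot_lmul_matrix matrix_vector_mul_assoc transpose_matrix_vector)
  then show ?thesis using assms by (simp add: pos_semidef_def)
qed

lemma pos_semidef_gram: "pos_semidef (A ** transpose A)"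
  using pos_semidef_congruence [OF pos_semidef_mat_1, of A] by simp

lemma diag_resolvent_norm_le:
  fixes d x w :: "real^'n" and M :: "real^'n^'n"
  assumes d_pos: "\<forall>i. 0 < d $ i" and d_le: "\<forall>i. d $ i \<le> H"
    and M: "pos_semidef M" and k: "0 < k"
    and eq: "w + k *\<^sub>R (diag_mat d *v (M *v w)) = diag_mat d *v (M *v (diag_mat d *v x))"
  shows "norm w \<le> H / k * norm x"
proof -
  define Q where "Q v = (\<Sum>i\<in>UNIV. d $ i * (v $ i)\<^sup>2)" for v :: "real^'n"
  define z where "z = diag_mat d *v x - k *\<^sub>R w"
  define y where "y = M *v z"
  have "diag_mat d *v y = w"
    using eq by (simp add: y_def z_def matrix_vector_mult_diff_distrib matrix_vector_mult_scaleR
        algebra_simps)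
  then have w: "w $ i = d $ i * y $ i" for i
    by (auto simp: diag_mat_mult_vec vec_eq_iff)
  have x: "d $ i * x $ i = z $ i + k * d $ i * y $ i" for i
    using w by (simp add: z_def diag_mat_mult_vec)
  have d_nonneg: "0 \<le> d $ i" for i
    using d_pos by (simp add: less_imp_le)
  have H: "0 \<le> H"
    using d_pos d_le by (meson less_le_trans less_imp_le)
  have pointwise: "2 * k * (z $ i * y $ i) + k\<^sup>2 * (d $ i * (y $ i)\<^sup>2) \<le> d $ i * (x $ i)\<^sup>2"
    for i
  proof -
    have "d $ i * (2 * k * (z $ i * y $ i) + k\<^sup>2 * (d $ i * (y $ i)\<^sup>2))
        \<le> (z $ i + k * d $ i * y $ i)\<^sup>2"
      by (simp add: power2_eq_square algebra_simps)
    also have "\<dots> = d $ i * (d $ i * (x $ i)\<^sup>2)"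
      by (simp flip: x add: power2_eq_square)
    finally show ?thesis
      using d_pos by simp
  qed
  have "0 \<le> 2 * k * (z \<bullet> y)"
    using M k by (simp add: pos_semidef_def y_def)
  moreover have "2 * k * (z \<bullet> y) + k\<^sup>2 * Q y \<le> Q x"
    using sum_mono [OF pointwise] by (simp add: Q_def inner_vec_def sum.distrib sum_distrib_left)
  ultimately have yx: "k\<^sup>2 * Q y \<le> Q x"
    by linarith
  have wy: "(norm w)\<^sup>2 \<le> H * Q y"
    unfolding norm_vec_power2 Q_def sum_distrib_left w
  proof (intro sum_mono)
    fix i
    have "(d $ i * y $ i)\<^sup>2 = d $ i * (d $ i * (y $ i)\<^sup>2)"
      by (simp add: power2_eq_square)
    also have "\<dots> \<le> H * (d $ i * (y $ i)\<^sup>2)"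
      using d_le d_nonneg [of i] by (intro mult_right_mono) simp_all
    finally show "(d $ i * y $ i)\<^sup>2 \<le> H * (d $ i * (y $ i)\<^sup>2)" .
  qed
  have xx: "Q x \<le> H * (norm x)\<^sup>2"
    unfolding norm_vec_power2 Q_def sum_distrib_left
    using d_le by (intro sum_mono mult_right_mono) auto
  have "(k * norm w)\<^sup>2 \<le> H * (k\<^sup>2 * Q y)"
    using mult_left_mono [OF wy, of "k\<^sup>2"] by (simp add: power_mult_distrib mult_ac)
  also have "\<dots> \<le> (H * norm x)\<^sup>2"
    using mult_left_mono [OF order_trans [OF yx xx] H]
    by (simp add: power_mult_distrib power2_eq_square mult_ac)
  finally have "k * norm w \<le> H * norm x"
    using H by (auto intro: power2_le_imp_le)
  then show ?thesis
    using k by (simp add: field_simps)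
qed

lemma opnorm_diag_resolvent_le:
  fixes d :: "real^'n" and M :: "real^'n^'n"
  assumes "\<forall>i. 0 < d $ i" and "\<forall>i. d $ i \<le> H" and "pos_semidef M" and "0 < k"
  shows "opnorm (matrix_inv (mat 1 + k *\<^sub>R (diag_mat d ** M)) ** (diag_mat d ** M ** diag_mat d))
           \<le> H / k"
proof -
  define N where "N = mat 1 + k *\<^sub>R (diag_mat d ** M)"
  define P where "P = diag_mat d ** M ** diag_mat d"
  have bound: "norm w \<le> H / k * norm x" if "N *v w = P *v x" for w x
    using diag_resolvent_norm_le [OF assms] that
    by (simp add: N_def P_def matrix_vector_mult_add_rdistrib
        flip: scaleR_matrix_vector_assoc matrix_vector_mul_assoc)
  have "\<forall>w. N *v w = 0 \<longrightarrow> w = 0"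
    using bound [of _ 0] by fastforce
  then have inv: "invertible N"
    using matrix_left_invertible_ker invertible_left_inverse by blast
  have "opnorm (matrix_inv N ** P) \<le> H / k"
    unfolding opnorm_def
  proof (rule onorm_le)
    fix x
    have "N *v ((matrix_inv N ** P) *v x) = P *v x"
      by (simp add: matrix_vector_mul_assoc matrix_mul_assoc matrix_inv_right [OF inv])
    then show "norm ((matrix_inv N ** P) *v x) \<le> H / k * norm x"
      by (rule bound)
  qed
  then show ?thesis
    by (simp add: N_def P_def)
qed

lemma abs_le_sup_norm2:
  assumes "bounded (range (\<lambda>p. h (fst p) (snd p)))"
  shows "\<bar>h a b\<bar> \<le> sup_norm2 h"
proof -
  obtain B where "\<forall>y\<in>range (\<lambda>p. h (fst p) (snd p)). \<bar>y\<bar> \<le> B"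
    using assms bounded_real by blast
  then have "bdd_above (range (\<lambda>p. \<bar>h (fst p) (snd p)\<bar>))"
    by (auto intro: bdd_aboveI [where M = B])
  from cSUP_upper [OF UNIV_I this, of "(a, b)"] show ?thesis
    by (simp add: sup_norm2_def)
qed

lemma opnorm_scaled_matrix_inv_diag_le:
  assumes "0 < a" and "a \<le> c" and "0 < b" and "\<forall>i. b \<le> d $ i"
  shows "opnorm ((1 / c) *\<^sub>R matrix_inv (diag_mat d)) \<le> 1 / (a * b)"
proof -
  have d_pos: "0 < d $ i" for i
    using assms by (meson less_le_trans)
  have inv: "matrix_inv (diag_mat d) = diag_mat (\<chi> i. inverse (d $ i))"
    using d_pos by (intro matrix_inv_diag_mat) (metis less_irrefl)
  show ?thesis
    unfolding inv scaleR_diag_mat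
  proof (intro opnorm_diag_mat_le allI)
    fix i
    have le: "a * b \<le> c * d $ i"
      using assms by (intro mult_mono) auto
    have "\<bar>((1 / c) *\<^sub>R (\<chi> i. inverse (d $ i))) $ i\<bar> = 1 / (c * d $ i)"
      using assms d_pos [of i] by (simp add: field_simps)
    also have "\<dots> \<le> 1 / (a * b)"
      using le assms by (intro divide_left_mono) (auto intro: mult_pos_pos less_le_trans)
    finally show "\<bar>((1 / c) *\<^sub>R (\<chi> i. inverse (d $ i))) $ i\<bar> \<le> 1 / (a * b)" .
  qed
qed

lemma opnorm_scaled_congruence_resolvent_le:
  fixes d :: "real^'n" and M :: "real^'n^'n"
  assumes d_pos: "\<forall>i. 0 < d $ i" and d_le: "\<forall>i. d $ i \<le> H"
    and M: "pos_semidef M" and "0 < \<gamma>" and "0 < \<epsilon>" and "1 \<le> q" and "q \<le> chi"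
  defines "P \<equiv> diag_mat d ** M ** diag_mat d"
  shows "opnorm (matrix_inv (mat 1 + ((\<gamma> / (\<epsilon> * q)) *\<^sub>R P) ** matrix_inv (diag_mat d))
                   ** P)
           \<le> \<epsilon> / \<gamma> * chi * H"
proof -
  define k where "k = \<gamma> / (\<epsilon> * q)"
  have k: "0 < k"
    using assms by (simp add: k_def)
  have "diag_mat d ** matrix_inv (diag_mat d) = mat 1"
    using d_pos
    by (simp add: matrix_inv_diag_mat diag_mat_mult mat_1_eq_diag_mat order_less_imp_not_eq2)
  then have "(k *\<^sub>R P) ** matrix_inv (diag_mat d) = k *\<^sub>R (diag_mat d ** M)"
    by (simp add: P_def flip: matrix_mul_assoc scalar_matrix_assoc)
  then have "opnorm (matrix_inv (mat 1 + (k *\<^sub>R P) ** matrix_inv (diag_mat d)) ** P) \<le> H / k"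
    using opnorm_diag_resolvent_le [OF d_pos d_le M k] by (simp add: P_def)
  also have "H / k \<le> \<epsilon> / \<gamma> * chi * H"
  proof -
    have "0 \<le> H"
      using d_pos d_le by (meson less_le_trans less_imp_le)
    then show ?thesis
      using assms by (simp add: k_def field_simps mult_left_mono)
  qed
  finally show ?thesis
    by (simp add: k_def)
qed

lemma pos_semidef_covariance_recursion:
  assumes "pos_semidef (\<Sigma> 0)"
    and "\<forall>t. \<Sigma> (Suc t) = C ** transpose C + A ** \<Sigma> t ** transpose A
                         + B ** outer (Z (Suc t)) (Z (Suc t)) ** transpose B"
  shows "pos_semidef (\<Sigma> t)"
proof (induction t)
  case 0
  show ?case using assms(1) .
next
  case (Suc t)
  then show ?case
    using assms(2) by (simp add: pos_semidef_add pos_semidef_gram pos_semidef_congruence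
        pos_semidef_outer)
qed

theorem lemma2:
  fixes \<mu> :: "real^'n"
    and A B C \<Sigma>0 :: "real^'n^'n"
    and Z R S :: "nat \<Rightarrow> real^'n"
    and \<Sigma> :: "nat \<Rightarrow> real^'n^'n"
    and h :: "real \<Rightarrow> real \<Rightarrow> real"
    and q :: "real^'n \<Rightarrow> real^'n^'n \<Rightarrow> real"
    and \<gamma> \<epsilon> s_low chi :: real
  assumes Sigma0_pd: "pos_def \<Sigma>0"
    and S0_pos: "\<forall>i. S 0 $ i > 0"
    and R_def: "\<forall>t. R (Suc t) = \<mu> + Z (Suc t)"
    and Sigma_init: "\<Sigma> 0 = \<Sigma>0"
    and Sigma_rec: "\<forall>t. \<Sigma> (Suc t) = C ** transpose C + A ** \<Sigma> t ** transpose A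
                         + B ** outer (Z (Suc t)) (Z (Suc t)) ** transpose B"
    and S_rec: "\<forall>t i. S (Suc t) $ i = h (S t $ i) (R (Suc t) $ i)"
    and gamma_pos: "\<gamma> > 0" and eps_pos: "\<epsilon> > 0"
    and C_full_rank: "rank C = CARD('n)"
    and h_bdd: "bounded (range (\<lambda>p. h (fst p) (snd p)))"
    and s_low_pos: "s_low > 0"
    and h_lower: "\<forall>s r. h s r \<ge> s_low"
    and q_bounds: "\<forall>s p. 1 \<le> q s p \<and> q s p \<le> chi"
  shows "\<forall>t\<ge>1.
     let \<Psi> = diag_mat (S t);
         P = \<Psi> ** \<Sigma> t ** \<Psi>;
         Pt = (\<gamma> / (\<epsilon> * q (S t) P)) *\<^sub>R P
     in opnorm ((1 / (\<epsilon> * q (S t) P)) *\<^sub>R matrix_inv \<Psi>) \<le> 1 / (\<epsilon> * s_low)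
      \<and> opnorm (matrix_inv (mat 1 + Pt ** matrix_inv \<Psi>) ** P)
          \<le> \<epsilon> / \<gamma> * chi * sup_norm2 h"
proof -
  have S_low: "s_low \<le> S t $ i" if "1 \<le> t" for t i
    using that h_lower S_rec by (cases t) auto
  have S_high: "S t $ i \<le> sup_norm2 h" if "1 \<le> t" for t i
    using that abs_le_sup_norm2 [OF h_bdd] S_rec
    by (cases t) (auto intro: order_trans [OF abs_ge_self])
  have "pos_semidef (\<Sigma> t)" for t
    using pos_semidef_covariance_recursion [OF _ Sigma_rec] Sigma0_pd Sigma_init
    by (simp add: pos_def_imp_pos_semidef)
  then show ?thesis
    unfolding Let_def
    using S_low S_high s_low_pos gamma_pos eps_pos q_bounds
    by (intro allI impI conjI opnorm_scaled_matrix_inv_diag_le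
        opnorm_scaled_congruence_resolvent_le) (auto intro: less_le_trans)
qed

end
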